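(* Suppose the location depends only on the parameter of interest and the scatter only on the nuisance: $\mu(\theta)=\mu(\gamma)$, $\Sigma(\theta)=\Sigma(\xi)$, with the parameterization satisfying P1–P4. Then $\bar{\mathbf I}(\gamma_0\mid\xi_0,\bar g_0)=\bar{\mathbf I}(\gamma_0\mid\xi_0)=\mathbf I_{\gamma_0}$, i.e. the semiparametric efficient FIM (density generator and $\xi$ unknown) coincides with the parametric efficient FIM ($\bar g_0$ known, $\xi$ unknown), which in turn coincides with the FIM for $\gamma$ when both $\xi_0$ and $\bar g_0$ are known.
   Context: RES model: $\mathcal G$ = measurable $g:\mathbb R^+\to\mathbb R^+_0$ with $\int_0^\infty t^{m/2-1}g(t)dt=\delta_m:=\pi^{-m/2}\Gamma(m/2)$; $RES_m(\mu,\Sigma,g)$ has density $|\Sigma|^{-1/2}g((\mathbf x-\mu)^T\Sigma^{-1}(\mathbf x-\mu))$; $\overline{\mathcal G}=\{\bar g\in\mathcal G:\delta_m^{-1}\int_0^\infty q^{m/2}\bar g(q)dq=m\}$. Parametrized model: $\theta=(\gamma^T,\xi^T)^T\in\Gamma\times\Psi\subseteq\mathbb R^q\times\mathbb R^r$ open, differentiable $\theta\mapsto\mu(\theta)$, $\theta\mapsto\Sigma(\theta)$ with (P1) continuity; (P2) the Jacobian of $\theta\mapsto(\mu(\theta)^T,\mathrm{vecs}(\Sigma(\theta))^T)^T$ has full column rank; (P3) $\Sigma(\theta)$ positive definite; (P4) $E_0\{\mathcal Q^2\}$, $\alpha(\bar g_0)$, $\beta(\bar g_0)$ finite. Truth $RES_m(\mu(\theta_0),\Sigma(\theta_0),\bar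 g_0)$, $\bar g_0\in\overline{\mathcal G}$ positive and $C^1$ with $q^{m/2+1}\bar g_0(q)\to0$; $\mathcal Q=(\mathbf x-\mu_0)^T\Sigma_0^{-1}(\mathbf x-\mu_0)$, $\bar\varphi_0=-2\bar g_0'/\bar g_0$, $\alpha(\bar g_0)=E_0\{\mathcal Q^2\bar\varphi_0(\mathcal Q)^2\}/(m(m+2))$, $\beta(\bar g_0)=E_0\{\mathcal Q\bar\varphi_0(\mathcal Q)^2\}/m$. $\mathbf s_{\theta_0}=(\mathbf s_{\gamma_0}^T,\mathbf s_{\xi_0}^T)^T$: gradient at $\theta_0$ of $\log(|\Sigma(\theta)|^{-1/2}\bar g_0((\mathbf x-\mu(\theta))^T\Sigma(\theta)^{-1}(\mathbf x-\mu(\theta))))$; FIM blocks $\mathbf I_{\gamma_0}=E_0\{\mathbf s_{\gamma_0}\mathbf s_{\gamma_0}^T\}$, $\mathbf I_{\gamma_0\xi_0}$, $\mathbf I_{\xi_0}$. $\mathcal H=\{h:E_0h=0,E_0h^2<\infty\}$ with $\langle h_1,h_2\rangle=E_0\{h_1h_2\}$; $\mathcal T_{\xi_0}=\mathrm{Span}$ of components of $\mathbf s_{\xi_0}$; $\mathcal T^u=\{h\in\mathcal H:h=f(\mathcal Q)\text{ a.s.}\}$, $\mathcal T^c=\{h\in\mathcal T^u:E_0\{\mathcal Qh\}=0\}$. $\bar{\mathbf I}(\gamma_0\mid\xi_0)=\mathbf I_{\gamma_0}-\mathbf I_{\gamma_0\xi_0}\mathbf I_{\xi_0}^{-1}\mathbf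 I_{\gamma_0\xi_0}^T$; $\bar{\mathbf I}(\gamma_0\mid\xi_0,\bar g_0)=E_0\{\bar{\mathbf s}\bar{\mathbf s}^T\}$, $\bar{\mathbf s}=\mathbf s_{\gamma_0}-\Pi(\mathbf s_{\gamma_0}\mid\mathcal T_{\xi_0}+\mathcal T^c)$ (componentwise orthogonal projection). *)

theory Defs
  imports "HOL-Analysis.Analysis"
begin

definition delta_m :: "nat \<Rightarrow> real" where
  "delta_m m = pi powr (- real m / 2) * Gamma (real m / 2)"

definition G_class :: "nat \<Rightarrow> (real \<Rightarrow> real) \<Rightarrow> bool" where
  "G_class m g \<longleftrightarrow>
     set_borel_measurable borel {0<..} g \<and> (\<forall>t>0. 0 \<le> g t) \<and>
     ((\<lambda>t. t powr (real m / 2 - 1) * g t) has_integral delta_m m) {0<..}"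

definition Gbar_class :: "nat \<Rightarrow> (real \<Rightarrow> real) \<Rightarrow> bool" where
  "Gbar_class m g \<longleftrightarrow> G_class m g \<and>
     (\<lambda>q. q powr (real m / 2) * g q) integrable_on {0<..} \<and>
     integral {0<..} (\<lambda>q. q powr (real m / 2) * g q) / delta_m m = real m"

definition sym_posdef :: "real^'n^'n \<Rightarrow> bool" where
  "sym_posdef A \<longleftrightarrow> transpose A = A \<and> (\<forall>v. v \<noteq> 0 \<longrightarrow> 0 < v \<bullet> (A *v v))"

definition mahal :: "real^'m \<Rightarrow> real^'m^'m \<Rightarrow> real^'m \<Rightarrow> real" where
  "mahal mu S x = (x - mu) \<bullet> (matrix_inv S *v (x - mu))"

definition RES_density :: "real^'m \<Rightarrow> real^'m^'m \<Rightarrow> (real \<Rightarrow> real) \<Rightarrow> real^'m \<Rightarrow> real" where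
  "RES_density mu S g x = det S powr (-1/2) * g (mahal mu S x)"

definition RES :: "real^'m \<Rightarrow> real^'m^'m \<Rightarrow> (real \<Rightarrow> real) \<Rightarrow> (real^'m) measure" where
  "RES mu S g = density lborel (\<lambda>x. ennreal (RES_density mu S g x))"

definition gradient :: "('a::real_inner \<Rightarrow> real) \<Rightarrow> 'a \<Rightarrow> 'a" where
  "gradient f a = (THE v. (f has_derivative (\<lambda>h. v \<bullet> h)) (at a))"

definition log_lik :: "(real^'q \<Rightarrow> real^'m) \<Rightarrow> (real^'r \<Rightarrow> real^'m^'m) \<Rightarrow> (real \<Rightarrow> real)
    \<Rightarrow> real^'m \<Rightarrow> ((real^'q) \<times> (real^'r)) \<Rightarrow> real" where
  "log_lik mu Sig g x \<theta> = ln (RES_density (mu (fst \<theta>)) (Sig (snd \<theta>)) g x)"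

definition score :: "(real^'q \<Rightarrow> real^'m) \<Rightarrow> (real^'r \<Rightarrow> real^'m^'m) \<Rightarrow> (real \<Rightarrow> real)
    \<Rightarrow> ((real^'q) \<times> (real^'r)) \<Rightarrow> real^'m \<Rightarrow> (real^'q) \<times> (real^'r)" where
  "score mu Sig g \<theta>0 x = gradient (log_lik mu Sig g x) \<theta>0"

definition Emat :: "'a measure \<Rightarrow> ('a \<Rightarrow> real^'p) \<Rightarrow> ('a \<Rightarrow> real^'s) \<Rightarrow> real^'s^'p" where
  "Emat M u v = (\<chi> i j. integral\<^sup>L M (\<lambda>x. u x $ i * v x $ j))"

definition L2_0 :: "'a measure \<Rightarrow> ('a \<Rightarrow> real) set" where
  "L2_0 M = {h. h \<in> borel_measurable M \<and> integrable M h \<and>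
                integrable M (\<lambda>x. (h x)\<^sup>2) \<and> integral\<^sup>L M h = 0}"

definition span_comp :: "('a \<Rightarrow> real^'r) \<Rightarrow> ('a \<Rightarrow> real) set" where
  "span_comp s = {(\<lambda>x. c \<bullet> s x) | c. True}"

definition T_u :: "'a measure \<Rightarrow> ('a \<Rightarrow> real) \<Rightarrow> ('a \<Rightarrow> real) set" where
  "T_u M Q = {h \<in> L2_0 M. \<exists>f \<in> borel_measurable borel. AE x in M. h x = f (Q x)}"

definition T_c :: "'a measure \<Rightarrow> ('a \<Rightarrow> real) \<Rightarrow> ('a \<Rightarrow> real) set" where
  "T_c M Q = {h \<in> T_u M Q. integral\<^sup>L M (\<lambda>x. Q x * h x) = 0}"

definition fun_set_plus :: "('a \<Rightarrow> real) set \<Rightarrow> ('a \<Rightarrow> real) set \<Rightarrow> ('a \<Rightarrow> real) set" where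
  "fun_set_plus A B = {(\<lambda>x. a x + b x) | a b. a \<in> A \<and> b \<in> B}"

definition is_orth_proj :: "'a measure \<Rightarrow> ('a \<Rightarrow> real) set \<Rightarrow> ('a \<Rightarrow> real) \<Rightarrow> ('a \<Rightarrow> real) \<Rightarrow> bool" where
  "is_orth_proj M S h p \<longleftrightarrow> p \<in> S \<and> (\<forall>f \<in> S. integral\<^sup>L M (\<lambda>x. (h x - p x) * f x) = 0)"

definition orth_proj :: "'a measure \<Rightarrow> ('a \<Rightarrow> real) set \<Rightarrow> ('a \<Rightarrow> real) \<Rightarrow> ('a \<Rightarrow> real)" where
  "orth_proj M S h = (SOME p. is_orth_proj M S h p)"

end

theory Submission
  imports Defs
begin

(* Write d = x - mu0.  On the set x ~= mu0, which has full measure, the gamma-score is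
   phi0(Q) times a linear form in d, hence odd under the point reflection x -> 2 mu0 - x,
   while the xi-score is a constant minus phi0(Q) times a quadratic form in d, hence even.
   Elements of T_c are functions of Q and thus even as well.  The true law is invariant under
   the reflection, so odd-times-even integrands have mean zero: the cross information vanishes,
   giving the parametric identity, and the gamma-score is orthogonal to the whole nuisance
   tangent set, so its projection is zero and the efficient score is the score itself.  The only
   analytic work is to check that all these scores are square integrable, which is where P4 and
   the finiteness of the elliptical measure enter. *)

section \<open>Positive definite matrices\<close>

definition quadratic_posdef :: "real^'n^'n \<Rightarrow> bool" where
  "quadratic_posdef A \<longleftrightarrow> (\<forall>v. v \<noteq> 0 \<longrightarrow> 0 < v \<bullet> (A *v v))"

lemma sym_posdef_imp_quadratic_posdef: "sym_posdef A \<Longrightarrow> quadratic_posdef A"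
  unfolding sym_posdef_def quadratic_posdef_def by blast

lemma matrix_inv_right:
  fixes A :: "real^'n^'n"
  assumes "invertible A"
  shows "A ** matrix_inv A = mat 1"
  using someI_ex[OF assms[unfolded invertible_def]] unfolding matrix_inv_def by auto

lemma quadratic_posdef_invertible:
  fixes A :: "real^'n^'n"
  assumes "quadratic_posdef A"
  shows "invertible A"
proof -
  have "inj ((*v) A)"
  proof (rule injI)
    fix x y assume "A *v x = A *v y"
    then have "A *v (x - y) = 0" by (simp add: matrix_vector_mult_diff_distrib)
    then show "x = y"
      using assms unfolding quadratic_posdef_def by (metis inner_zero_right less_irrefl right_minus_eq)
  qed
  then show ?thesis using matrix_left_invertible_injective invertible_left_inverse by metis
qed

lemma quadratic_posdef_matrix_inv:
  fixes A :: "real^'n^'n"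
  assumes "quadratic_posdef A"
  shows "quadratic_posdef (matrix_inv A)"
  unfolding quadratic_posdef_def
proof (intro allI impI)
  fix v :: "real^'n" assume "v \<noteq> 0"
  define w where "w = matrix_inv A *v v"
  have Aw: "A *v w = v"
    using matrix_inv_right[OF quadratic_posdef_invertible[OF assms]]
    by (simp add: w_def matrix_vector_mul_assoc)
  with \<open>v \<noteq> 0\<close> have "w \<noteq> 0" by auto
  then have "0 < w \<bullet> (A *v w)" using assms unfolding quadratic_posdef_def by blast
  then show "0 < v \<bullet> (matrix_inv A *v v)" using Aw by (simp add: w_def inner_commute)
qed

lemma quadratic_posdef_coercive:
  fixes A :: "real^'n^'n"
  assumes "quadratic_posdef A"
  obtains c where "c > 0" "\<And>v. c * (norm v)\<^sup>2 \<le> v \<bullet> (A *v v)"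
proof -
  let ?q = "\<lambda>v::real^'n. v \<bullet> (A *v v)"
  have "continuous_on (sphere 0 1) ?q"
    by (intro continuous_intros linear_continuous_on matrix_vector_mul_bounded_linear)
  moreover have "sphere (0::real^'n) 1 \<noteq> {}"
    using norm_axis_1[of undefined] by (metis empty_iff mem_sphere_0)
  ultimately obtain u where "u \<in> sphere 0 1" "\<forall>v\<in>sphere 0 1. ?q u \<le> ?q v"
    using continuous_attains_inf[OF compact_sphere] by blast
  then have u: "norm u = 1" and u_min: "\<And>v. norm v = 1 \<Longrightarrow> ?q u \<le> ?q v" by auto
  have "?q u * (norm v)\<^sup>2 \<le> ?q v" for v
  proof (cases "v = 0")
    case False
    define w where "w = (1 / norm v) *\<^sub>R v"
    have vw: "v = norm v *\<^sub>R w" using False by (simp add: w_def)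
    have "?q v = (norm v)\<^sup>2 * ?q w"
      by (subst (1 2) vw) (simp add: matrix_vector_mult_scaleR power2_eq_square)
    moreover have "?q u \<le> ?q w" using False by (intro u_min) (simp add: w_def)
    ultimately show ?thesis by (simp add: mult_right_mono mult.commute)
  qed simp
  moreover have "0 < ?q u"
    using assms u unfolding quadratic_posdef_def by (metis norm_zero zero_neq_one)
  ultimately show ?thesis using that by blast
qed

lemma quadratic_posdef_det_pos:
  fixes A :: "real^'n^'n"
  assumes "quadratic_posdef A"
  shows "0 < det A"
proof (rule ccontr)
  assume "\<not> 0 < det A"
  define M where "M t = (1 - t) *\<^sub>R mat 1 + t *\<^sub>R A" for t :: real
  have "continuous_on {0..1} (\<lambda>t. det (M t))"
    unfolding det_def M_def by (intro continuous_intros)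
  moreover have "det (M 0) = 1" "det (M 1) = det A" by (simp_all add: M_def)
  ultimately obtain t where t: "0 \<le> t" "t \<le> 1" "det (M t) = 0"
    using IVT2'[of "\<lambda>t. det (M t)" 1 0 0] \<open>\<not> 0 < det A\<close> by auto
  \<comment> \<open>every matrix on the segment from the identity to A is positive definite, hence invertible\<close>
  have "quadratic_posdef (M t)"
    unfolding quadratic_posdef_def
  proof (intro allI impI)
    fix v :: "real^'n" assume "v \<noteq> 0"
    then have "0 < v \<bullet> v" "0 < v \<bullet> (A *v v)" using assms by (auto simp: quadratic_posdef_def)
    then have "0 < (1 - t) * (v \<bullet> v) + t * (v \<bullet> (A *v v))"
      using t by (cases "t = 1") (auto intro: add_pos_nonneg)
    then show "0 < v \<bullet> (M t *v v)"
      by (simp add: M_def matrix_vector_mult_add_rdistrib inner_add_right scaleR_matrix_vector_assoc[symmetric])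
  qed
  then show False using t(3) quadratic_posdef_invertible invertible_det_nz by blast
qed

section \<open>Derivatives of determinants and matrix inverses\<close>

lemma inner_gradient:
  fixes f :: "'a::euclidean_space \<Rightarrow> real"
  assumes "(f has_derivative L) (at a)"
  shows "gradient f a \<bullet> h = L h"
proof -
  interpret L: bounded_linear L using assms has_derivative_bounded_linear by blast
  define v where "v = (\<Sum>b\<in>Basis. L b *\<^sub>R b)"
  have Lv: "L = (\<lambda>h. v \<bullet> h)"
  proof
    fix h
    have "L h = L (\<Sum>b\<in>Basis. (h \<bullet> b) *\<^sub>R b)" by (simp add: euclidean_representation)
    also have "\<dots> = (\<Sum>b\<in>Basis. (h \<bullet> b) * L b)" by (simp add: L.sum L.scaleR)
    also have "\<dots> = v \<bullet> h" by (simp add: v_def inner_sum_right inner_commute mult.commute)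
    finally show "L h = v \<bullet> h" .
  qed
  have "gradient f a = v"
    unfolding gradient_def
  proof (rule the_equality)
    show "(f has_derivative (\<lambda>h. v \<bullet> h)) (at a)" using assms Lv by simp
    fix w assume "(f has_derivative (\<lambda>h. w \<bullet> h)) (at a)"
    then have "(\<lambda>h. w \<bullet> h) = (\<lambda>h. v \<bullet> h)" using has_derivative_unique assms Lv by metis
    then have "(w - v) \<bullet> (w - v) = 0" by (metis inner_diff_left right_minus_eq)
    then show "w = v" by simp
  qed
  then show ?thesis using Lv by simp
qed

lemma C1_differentiable_on_open_DERIV:
  fixes f :: "real \<Rightarrow> real"
  assumes "f C1_differentiable_on S" "open S" "x \<in> S"
  shows "(f has_real_derivative deriv f x) (at x)"
proof -
  obtain D where "\<forall>v\<in>S. (f has_vector_derivative D v) (at v)"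
    using assms(1) unfolding C1_differentiable_on_def by blast
  then show ?thesis
    using assms(3) by (metis DERIV_imp_deriv has_real_derivative_iff_has_vector_derivative)
qed

lemma C1_differentiable_on_open_continuous_deriv:
  fixes f :: "real \<Rightarrow> real"
  assumes "f C1_differentiable_on S" "open S"
  shows "continuous_on S (deriv f)"
proof -
  obtain D where D: "\<forall>v\<in>S. (f has_vector_derivative D v) (at v)" "continuous_on S D"
    using assms(1) unfolding C1_differentiable_on_def by blast
  then have "\<forall>v\<in>S. deriv f v = D v"
    by (metis DERIV_imp_deriv has_real_derivative_iff_has_vector_derivative)
  then show ?thesis using D(2) continuous_on_cong by blast
qed

lemma bounded_bilinear_matrix_vector_mult:
  "bounded_bilinear ((*v) :: real^'n^'m \<Rightarrow> real^'n \<Rightarrow> real^'m)"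
  unfolding bilinear_conv_bounded_bilinear[symmetric] bilinear_def
  by (auto intro!: linearI simp: matrix_vector_mult_add_rdistrib matrix_vector_right_distrib
      scaleR_matrix_vector_assoc matrix_vector_mult_scaleR)

lemma abs_inner_matrix_vector_le:
  fixes A :: "real^'n^'m"
  obtains K where "0 \<le> K" "\<And>a d. \<bar>a \<bullet> (A *v d)\<bar> \<le> K * norm a * norm d"
proof -
  obtain K where K: "0 < K" "\<And>d. norm (A *v d) \<le> norm d * K"
    using bounded_linear.pos_bounded[OF matrix_vector_mul_bounded_linear] by blast
  have "\<bar>a \<bullet> (A *v d)\<bar> \<le> K * norm a * norm d" for a d
    using Cauchy_Schwarz_ineq2[of a "A *v d"] mult_left_mono[OF K(2)[of d] norm_ge_zero[of a]]
    by (simp add: mult_ac)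
  then show ?thesis using K(1) by (intro that[of K]) auto
qed

lemma has_derivative_vec_lambda:
  fixes f :: "'a::real_normed_vector \<Rightarrow> 'b::euclidean_space^'n"
  assumes "\<And>i. ((\<lambda>x. f x $ i) has_derivative (\<lambda>h. f' h $ i)) (at a within S)"
  shows "(f has_derivative f') (at a within S)"
proof (subst has_derivative_componentwise_within, intro ballI)
  fix b :: "'b^'n" assume "b \<in> Basis"
  then obtain i u where "b = axis i u" by (auto simp: Basis_vec_def)
  moreover have "((\<lambda>x. f x $ i \<bullet> u) has_derivative (\<lambda>h. f' h $ i \<bullet> u)) (at a within S)"
    by (rule bounded_linear.has_derivative[OF bounded_linear_inner_left assms])
  ultimately show "((\<lambda>x. f x \<bullet> b) has_derivative (\<lambda>h. f' h \<bullet> b)) (at a within S)"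
    by (simp add: inner_axis)
qed

lemma differentiable_vec_lambda:
  fixes f :: "'a::real_normed_vector \<Rightarrow> 'b::euclidean_space^'n"
  assumes "\<And>i. (\<lambda>x. f x $ i) differentiable (at a within S)"
  shows "f differentiable (at a within S)"
proof -
  have "\<forall>i. \<exists>D. ((\<lambda>x. f x $ i) has_derivative D) (at a within S)"
    using assms unfolding differentiable_def by blast
  then obtain D where "\<And>i. ((\<lambda>x. f x $ i) has_derivative D i) (at a within S)"
    by (auto dest!: choice)
  then have "(f has_derivative (\<lambda>h. \<chi> i. D i h)) (at a within S)"
    by (intro has_derivative_vec_lambda) simp
  then show ?thesis by (rule differentiableI)
qed

lemma has_derivative_vec_nth:
  "(f has_derivative f') F \<Longrightarrow> ((\<lambda>x. f x $ i) has_derivative (\<lambda>h. f' h $ i)) F"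
  by (rule bounded_linear.has_derivative[OF bounded_linear_vec_nth])

lemma differentiable_det:
  fixes f :: "'a::real_normed_vector \<Rightarrow> real^'n^'n"
  assumes "f differentiable (at x)"
  shows "(\<lambda>x. det (f x)) differentiable (at x)"
proof -
  obtain D where "(f has_derivative D) (at x)" using assms differentiable_def by blast
  then have D: "((\<lambda>x. f x $ i $ j) has_derivative (\<lambda>h. D h $ i $ j)) (at x)" for i j
    by (intro has_derivative_vec_nth)
  show ?thesis
    unfolding det_def differentiable_def
    by (rule exI, rule has_derivative_sum, rule has_derivative_mult, rule has_derivative_const,
        rule has_derivative_prod, rule D)
qed

lemma matrix_inv_cramer:
  fixes A :: "real^'n^'n"
  assumes "invertible A"
  shows "matrix_inv A $ i $ j = det (\<chi> a b. if b = i then axis j 1 $ a else A $ a $ b) / det A"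
proof -
  let ?x = "matrix_inv A *v axis j 1"
  have "A *v ?x = axis j 1"
    using matrix_inv_right[OF assms] by (simp add: matrix_vector_mul_assoc)
  then have "?x = (\<chi> k. det (\<chi> a b. if b = k then axis j 1 $ a else A $ a $ b) / det A)"
    using cramer assms invertible_det_nz by blast
  moreover have "?x $ i = matrix_inv A $ i $ j" by (simp add: matrix_vector_mult_basis column_def)
  ultimately show ?thesis by simp
qed

lemma differentiable_matrix_inv:
  fixes f :: "'a::real_normed_vector \<Rightarrow> real^'n^'n"
  assumes f: "f differentiable (at x0)" and inv: "invertible (f x0)"
  shows "(\<lambda>x. matrix_inv (f x)) differentiable (at x0)"
proof -
  obtain D where D: "(f has_derivative D) (at x0)" using f differentiable_def by blast
  let ?C = "\<lambda>i j x. det (\<chi> a b. if b = i then axis j 1 $ a else f x $ a $ b)"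
  have num: "(\<lambda>x. ?C i j x) differentiable (at x0)" for i j
  proof (rule differentiable_det)
    have "((\<lambda>x. \<chi> a b. if b = i then axis j 1 $ a else f x $ a $ b) has_derivative
        (\<lambda>h. \<chi> a b. if b = i then 0 else D h $ a $ b)) (at x0)"
      by (intro has_derivative_vec_lambda, rename_tac a b, case_tac "b = i")
        (simp_all add: has_derivative_vec_nth[OF has_derivative_vec_nth[OF D]])
    then show "(\<lambda>x. \<chi> a b. if b = i then axis j 1 $ a else f x $ a $ b) differentiable (at x0)"
      by (rule differentiableI)
  qed
  have den: "(\<lambda>x. det (f x)) differentiable (at x0)" by (rule differentiable_det[OF f])
  have "det (f x0) \<noteq> 0" using inv invertible_det_nz by blast
  moreover have "((\<lambda>x. det (f x)) \<longlongrightarrow> det (f x0)) (at x0)"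
    using differentiable_imp_continuous_within[OF den] by (simp add: continuous_within)
  ultimately have "\<forall>\<^sub>F x in at x0. det (f x) \<noteq> 0"
    by (intro tendsto_imp_eventually_ne)
  then have near: "\<forall>\<^sub>F x in at x0. invertible (f x)"
    by eventually_elim (simp add: invertible_det_nz)
  have entry: "(\<lambda>x. matrix_inv (f x) $ i $ j) differentiable (at x0)" for i j
  proof -
    obtain E where E: "((\<lambda>x. ?C i j x / det (f x)) has_derivative E) (at x0)"
      using differentiable_divide[OF num den \<open>det (f x0) \<noteq> 0\<close>] unfolding differentiable_def ..
    have "\<forall>\<^sub>F x in at x0. ?C i j x / det (f x) = matrix_inv (f x) $ i $ j"
      using near by eventually_elim (simp add: matrix_inv_cramer)
    then have "((\<lambda>x. matrix_inv (f x) $ i $ j) has_derivative E) (at x0)"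
      by (rule has_derivative_transform_eventually[OF E]) (simp_all add: matrix_inv_cramer inv)
    then show ?thesis by (rule differentiableI)
  qed
  then have "(\<lambda>x. matrix_inv (f x) $ i) differentiable (at x0)" for i
    by (rule differentiable_vec_lambda)
  then show ?thesis by (rule differentiable_vec_lambda)
qed

lemma differentiable_det_powr:
  fixes f :: "'a::real_normed_vector \<Rightarrow> real^'n^'n"
  assumes f: "f differentiable (at x0)" and pos: "0 < det (f x0)"
  shows "(\<lambda>x. det (f x) powr a) differentiable (at x0)"
proof -
  obtain Dd where "((\<lambda>x. det (f x)) has_derivative Dd) (at x0)"
    using differentiable_det[OF f] differentiable_def by blast
  moreover have "((\<lambda>z. z powr a) has_derivative (*) (a * det (f x0) powr (a - 1))) (at (det (f x0)))"
    using has_real_derivative_powr[OF pos] by (simp add: has_field_derivative_def)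
  ultimately show ?thesis
    by (intro differentiableI[OF has_derivative_compose])
qed

section \<open>The law of the Mahalanobis distance\<close>

lemma mahal_pos:
  assumes "quadratic_posdef S" "x \<noteq> \<mu>"
  shows "0 < mahal \<mu> S x"
  using quadratic_posdef_matrix_inv[OF assms(1)] assms(2)
  unfolding mahal_def quadratic_posdef_def by simp

lemma mahal_scaleR: "mahal \<mu> S (\<mu> + c *\<^sub>R y) = c\<^sup>2 * mahal 0 S y"
  unfolding mahal_def by (simp add: matrix_vector_mult_scaleR power2_eq_square)

lemma mahal_point_reflection: "mahal \<mu> S (2 *\<^sub>R \<mu> - x) = mahal \<mu> S x"
proof -
  have "2 *\<^sub>R \<mu> - x - \<mu> = - (x - \<mu>)" by (simp add: algebra_simps scaleR_2)
  then show ?thesis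
    unfolding mahal_def by (simp only: vec.neg inner_minus_left inner_minus_right minus_minus)
qed

lemma continuous_on_mahal: "continuous_on A (mahal \<mu> S)"
  unfolding mahal_def
  by (intro continuous_intros bounded_linear.continuous_on[OF matrix_vector_mul_bounded_linear])

lemma borel_measurable_mahal[measurable]: "mahal \<mu> S \<in> borel_measurable borel"
  using borel_measurable_continuous_onI[OF continuous_on_mahal] .

lemma bounded_mahal_sublevel:
  assumes "quadratic_posdef S"
  shows "bounded {y. mahal 0 S y \<le> 1}"
proof -
  obtain c where c: "c > 0" "\<And>v. c * (norm v)\<^sup>2 \<le> mahal 0 S v"
    using quadratic_posdef_coercive[OF quadratic_posdef_matrix_inv[OF assms]]
    unfolding mahal_def by (metis diff_zero)
  have "norm y \<le> 1 + 1 / c" if "mahal 0 S y \<le> 1" for y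
  proof -
    have "(norm y)\<^sup>2 \<le> 1 / c" using c that by (simp add: field_simps) (meson order_trans)
    moreover have "norm y \<le> 1 \<or> norm y \<le> (norm y)\<^sup>2"
      by (metis linorder_le_cases power2_eq_square mult_left_mono norm_ge_zero mult.right_neutral)
    ultimately show ?thesis using c(1) by (smt (verit) divide_pos_pos)
  qed
  then show ?thesis unfolding bounded_iff by blast
qed

definition unit_ellipsoid_volume :: "real^'m^'m \<Rightarrow> real" where
  "unit_ellipsoid_volume S = measure lborel {y. mahal 0 S y \<le> 1}"

lemma emeasure_mahal_sublevel:
  fixes \<mu> :: "real^'m"
  assumes S: "quadratic_posdef S" and t: "0 < t"
  shows "emeasure lborel {x. mahal \<mu> S x \<le> t} = ennreal (t powr (CARD('m) / 2) * unit_ellipsoid_volume S)"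
proof -
  let ?c = "sqrt t"
  let ?T = "\<lambda>x::real^'m. \<mu> + ?c *\<^sub>R x"
  have [measurable]: "{x. mahal \<mu> S x \<le> t} \<in> sets borel" by measurable
  have "?c \<noteq> 0" using t by simp
  then have L: "lborel = density (distr lborel borel ?T) (\<lambda>_. ennreal (\<bar>?c\<bar> ^ DIM(real^'m)))"
    using lborel_affine by blast
  have "emeasure lborel {x. mahal \<mu> S x \<le> t} =
      emeasure (density (distr lborel borel ?T) (\<lambda>_. ennreal (\<bar>?c\<bar> ^ DIM(real^'m)))) {x. mahal \<mu> S x \<le> t}"
    by (subst L) simp
  also have "\<dots> = ennreal (\<bar>?c\<bar> ^ DIM(real^'m)) * emeasure lborel (?T -` {x. mahal \<mu> S x \<le> t})"
    by (simp add: emeasure_density nn_integral_cmult_indicator emeasure_distr)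
  also have "?T -` {x. mahal \<mu> S x \<le> t} = {y. mahal 0 S y \<le> 1}"
    using t by (auto simp: mahal_scaleR)
  also have "emeasure lborel {y. mahal 0 S y \<le> 1} = ennreal (unit_ellipsoid_volume S)"
    unfolding unit_ellipsoid_volume_def
    using emeasure_bounded_finite[OF bounded_mahal_sublevel[OF S]]
    by (simp add: emeasure_eq_ennreal_measure)
  also have "\<bar>?c\<bar> ^ DIM(real^'m) = t powr (CARD('m) / 2)"
    using t by (simp add: powr_half_sqrt[symmetric] powr_realpow[symmetric] powr_powr)
  finally show ?thesis
    using t by (simp add: ennreal_mult' unit_ellipsoid_volume_def)
qed

lemma emeasure_mahal_sublevel_nonpos:
  assumes S: "quadratic_posdef S" and t: "t \<le> 0"
  shows "emeasure lborel {x. mahal \<mu> S x \<le> t} = 0"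
proof -
  have "{x. mahal \<mu> S x \<le> t} \<subseteq> {\<mu>}"
    using mahal_pos[OF S] t by (force simp: not_le[symmetric])
  then show ?thesis
    by (metis emeasure_lborel_countable countable_finite finite.emptyI finite_insert
        emeasure_mono le_zero_eq sets_lborel borel_closed closed_singleton)
qed

lemma nn_integral_power_density_atMost:
  fixes a V s :: real
  assumes a: "0 < a" and V: "0 \<le> V" and s: "0 < s"
  shows "(\<integral>\<^sup>+y. ennreal (indicator {0<..} y * (a * V * y powr (a - 1))) * indicator {..s} y \<partial>lborel)
    = ennreal (s powr a * V)"
proof -
  let ?F = "\<lambda>y. V * y powr a"
  have "continuous_on {0..s} ?F"
    by (intro continuous_intros continuous_on_powr') (use a in auto)
  moreover have "(?F has_vector_derivative (a * V * y powr (a - 1))) (at y)" if "y \<in> {0<..<s}" for y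
  proof -
    have "((\<lambda>y. y powr a) has_real_derivative a * y powr (a - 1)) (at y)"
      using that by (intro has_real_derivative_powr) simp
    then show ?thesis
      unfolding has_real_derivative_iff_has_vector_derivative[symmetric]
      by (metis (no_types) DERIV_cmult mult.assoc mult.commute)
  qed
  ultimately have "((\<lambda>y. a * V * y powr (a - 1)) has_integral (s powr a * V)) {0..s}"
    using fundamental_theorem_of_calculus_interior[of 0 s ?F] s a by (simp add: mult.commute)
  then have "(\<integral>\<^sup>+y. ennreal (indicator {0..s} y * (a * V * y powr (a - 1))) \<partial>lborel) = ennreal (s powr a * V)"
    by (rule nn_integral_has_integral_lebesgue[rotated]) (use a V in simp)
  moreover have "ennreal (indicator {0<..} y * (a * V * y powr (a - 1))) * indicator {..s} y
      = ennreal (indicator {0..s} y * (a * V * y powr (a - 1)))" for y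
    by (cases "y = 0") (auto simp: indicator_def)
  ultimately show ?thesis by simp
qed

lemma distr_mahal_lborel:
  fixes \<mu> :: "real^'m"
  defines "a \<equiv> real CARD('m) / 2"
  assumes S: "quadratic_posdef S"
  shows "distr lborel borel (mahal \<mu> S) =
    density lborel (\<lambda>t. ennreal (indicator {0<..} t * (a * unit_ellipsoid_volume S * t powr (a - 1))))"
    (is "_ = density lborel ?d")
proof (rule measure_eqI_generator_eq[where E = "range atMost" and \<Omega> = UNIV and A = "\<lambda>i. {..real i}"])
  show "Int_stable (range atMost :: real set set)"
    by (auto simp: Int_stable_def intro!: range_eqI[of _ _ "min _ _"])
  show "range atMost \<subseteq> Pow (UNIV :: real set)" by simp
  show "sets (distr lborel borel (mahal \<mu> S)) = sigma_sets UNIV (range atMost)"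
    and "sets (density lborel ?d) = sigma_sets UNIV (range atMost)"
    by (simp_all add: borel_eq_atMost sets_measure_of)
  have a: "0 < a" unfolding a_def by simp
  have V: "0 \<le> unit_ellipsoid_volume S" unfolding unit_ellipsoid_volume_def by simp
  have distr_atMost: "emeasure (distr lborel borel (mahal \<mu> S)) {..s} = emeasure lborel {x. mahal \<mu> S x \<le> s}" for s
    by (simp add: emeasure_distr vimage_def)
  have density_atMost: "emeasure (density lborel ?d) {..s} = (if 0 < s then ennreal (s powr a * unit_ellipsoid_volume S) else 0)" for s
  proof (cases "0 < s")
    case True
    then show ?thesis
      by (simp add: emeasure_density nn_integral_power_density_atMost[OF a V True])
  next
    case False
    then have "?d y * indicator {..s} y = 0" for y by (auto simp: indicator_def)
    then have "(\<integral>\<^sup>+y. ?d y * indicator {..s} y \<partial>lborel) = 0" by (simp only:) simp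
    then show ?thesis using False by (simp add: emeasure_density)
  qed
  show "emeasure (distr lborel borel (mahal \<mu> S)) X = emeasure (density lborel ?d) X" if "X \<in> range atMost" for X
    using that distr_atMost density_atMost emeasure_mahal_sublevel[OF S] emeasure_mahal_sublevel_nonpos[OF S]
    by (auto simp: a_def)
  show "range (\<lambda>i::nat. {..real i}) \<subseteq> range atMost" by auto
  show "(\<Union>i::nat. {..real i}) = UNIV" by (auto simp: real_arch_simple)
  show "emeasure (distr lborel borel (mahal \<mu> S)) {..real i} \<noteq> \<infinity>" for i :: nat
    using distr_atMost emeasure_mahal_sublevel[OF S] emeasure_mahal_sublevel_nonpos[OF S]
    by (cases "i = 0") simp_all
qed

section \<open>Elliptical measures\<close>

lemma sets_RES [simp, measurable_cong]: "sets (RES \<mu> S g) = sets borel"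
  unfolding RES_def by simp

lemma space_RES [simp]: "space (RES \<mu> S g) = UNIV"
  unfolding RES_def by simp

lemma borel_measurable_RES: "borel_measurable (RES \<mu> S g) = borel_measurable borel"
  by (rule measurable_cong_sets) simp_all

lemma RES_density_off_center:
  assumes "quadratic_posdef S" "x \<noteq> \<mu>"
  shows "RES_density \<mu> S g x = det S powr (-1/2) * (indicator {0<..} (mahal \<mu> S x) * g (mahal \<mu> S x))"
  using mahal_pos[OF assms] by (simp add: RES_density_def)

lemma borel_measurable_RES_density:
  assumes S: "quadratic_posdef S" and g: "G_class CARD('m) g"
  shows "RES_density (\<mu> :: real^'m) S g \<in> borel_measurable borel"
proof -
  have [measurable]: "(\<lambda>t. indicator {0<..} t * g t) \<in> borel_measurable borel"
    using g unfolding G_class_def set_borel_measurable_def by simp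
  have "RES_density \<mu> S g =
      (\<lambda>x. if x = \<mu> then RES_density \<mu> S g \<mu>
        else det S powr (-1/2) * (indicator {0<..} (mahal \<mu> S x) * g (mahal \<mu> S x)))"
    using RES_density_off_center[OF S] by auto
  also have "\<dots> \<in> borel_measurable borel" by measurable
  finally show ?thesis .
qed

lemma distr_lborel_point_reflection:
  fixes \<mu> :: "'a::euclidean_space"
  shows "distr lborel borel (\<lambda>x. 2 *\<^sub>R \<mu> - x) = lborel"
proof -
  have "lborel = density (distr lborel borel (\<lambda>x. 2 *\<^sub>R \<mu> + (-1) *\<^sub>R x)) (\<lambda>_. ennreal (\<bar>-1::real\<bar> ^ DIM('a)))"
    by (rule lborel_affine) simp
  then show ?thesis by (simp add: density_1)
qed

context
  fixes \<mu> :: "real^'m" and S g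
  assumes RES_density_measurable[measurable]: "RES_density \<mu> S g \<in> borel_measurable borel"
begin

lemma AE_RES_ne_center: "AE x in RES \<mu> S g. x \<noteq> \<mu>"
  using AE_lborel_singleton[of \<mu>] unfolding RES_def by (subst AE_density) (auto elim: AE_mp)

lemma distr_RES_point_reflection:
  "distr (RES \<mu> S g) borel (\<lambda>x. 2 *\<^sub>R \<mu> - x) = RES \<mu> S g"
proof -
  have [measurable]: "(\<lambda>x. 2 *\<^sub>R \<mu> - x) \<in> borel_measurable lborel" by simp
  have "RES_density \<mu> S g (2 *\<^sub>R \<mu> - x) = RES_density \<mu> S g x" for x
    by (simp add: RES_density_def mahal_point_reflection)
  moreover have "density (distr lborel borel (\<lambda>x. 2 *\<^sub>R \<mu> - x)) (\<lambda>x. ennreal (RES_density \<mu> S g x)) =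
      distr (density lborel (\<lambda>x. ennreal (RES_density \<mu> S g (2 *\<^sub>R \<mu> - x)))) borel (\<lambda>x. 2 *\<^sub>R \<mu> - x)"
    by (rule density_distr) measurable
  ultimately show ?thesis
    unfolding RES_def distr_lborel_point_reflection by simp
qed

lemma integral_RES_odd:
  fixes f :: "real^'m \<Rightarrow> real"
  assumes f[measurable]: "f \<in> borel_measurable borel"
    and odd: "AE x in RES \<mu> S g. f (2 *\<^sub>R \<mu> - x) = - f x"
  shows "integral\<^sup>L (RES \<mu> S g) f = 0"
proof -
  have "integral\<^sup>L (RES \<mu> S g) f = integral\<^sup>L (distr (RES \<mu> S g) borel (\<lambda>x. 2 *\<^sub>R \<mu> - x)) f"
    by (simp only: distr_RES_point_reflection)
  also have "\<dots> = integral\<^sup>L (RES \<mu> S g) (\<lambda>x. f (2 *\<^sub>R \<mu> - x))"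
    by (rule integral_distr) measurable
  also have "\<dots> = integral\<^sup>L (RES \<mu> S g) (\<lambda>x. - f x)"
    by (rule integral_cong_AE) (use odd in \<open>simp_all add: borel_measurable_RES\<close>)
  finally show ?thesis by simp
qed

end

lemma emeasure_RES_space:
  fixes \<mu> :: "real^'m"
  assumes S: "quadratic_posdef S" and g: "G_class CARD('m) g"
  shows "emeasure (RES \<mu> S g) UNIV =
    ennreal (det S powr (-1/2) * (CARD('m) / 2 * unit_ellipsoid_volume S * delta_m CARD('m)))"
proof -
  let ?a = "real CARD('m) / 2" and ?V = "unit_ellipsoid_volume S" and ?c = "det S powr (-1/2)"
  let ?h = "\<lambda>t. indicator {0<..} t * g t"
  have [measurable]: "?h \<in> borel_measurable borel"
    using g unfolding G_class_def set_borel_measurable_def by simp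
  have g_nonneg: "0 \<le> ?h t" for t
    using g unfolding G_class_def by (simp add: indicator_def)
  have [measurable]: "RES_density \<mu> S g \<in> borel_measurable borel"
    by (rule borel_measurable_RES_density[OF S g])
  have "emeasure (RES \<mu> S g) UNIV = (\<integral>\<^sup>+x. ennreal (RES_density \<mu> S g x) \<partial>lborel)"
    unfolding RES_def by (simp add: emeasure_density)
  also have "\<dots> = (\<integral>\<^sup>+x. ennreal ?c * ennreal (?h (mahal \<mu> S x)) \<partial>lborel)"
    using AE_lborel_singleton[of \<mu>]
  proof (intro nn_integral_cong_AE, eventually_elim)
    fix x assume "x \<noteq> \<mu>"
    moreover have "0 < ?c" using quadratic_posdef_det_pos[OF S] by simp
    ultimately show "ennreal (RES_density \<mu> S g x) = ennreal ?c * ennreal (?h (mahal \<mu> S x))"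
      using g_nonneg[of "mahal \<mu> S x"] by (simp add: RES_density_off_center[OF S] ennreal_mult)
  qed
  also have "\<dots> = ennreal ?c * (\<integral>\<^sup>+t. ennreal (?h t) \<partial>distr lborel borel (mahal \<mu> S))"
    by (subst nn_integral_distr) (simp_all add: nn_integral_cmult)
  also have "(\<integral>\<^sup>+t. ennreal (?h t) \<partial>distr lborel borel (mahal \<mu> S)) =
      (\<integral>\<^sup>+t. ennreal (indicator {0<..} t * (?a * ?V * t powr (?a - 1))) * ennreal (?h t) \<partial>lborel)"
    unfolding distr_mahal_lborel[OF S] by (rule nn_integral_density) measurable
  also have "\<dots> = (\<integral>\<^sup>+t. ennreal (indicator {0<..} t * (?a * ?V * (t powr (?a - 1) * g t))) \<partial>lborel)"
  proof (rule nn_integral_cong)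
    fix t :: real
    have "0 \<le> ?V" unfolding unit_ellipsoid_volume_def by simp
    then show "ennreal (indicator {0<..} t * (?a * ?V * t powr (?a - 1))) * ennreal (?h t) =
        ennreal (indicator {0<..} t * (?a * ?V * (t powr (?a - 1) * g t)))"
      using g_nonneg[of t] by (cases "0 < t") (simp_all add: ennreal_mult[symmetric] mult_ac)
  qed
  also have "\<dots> = ennreal (?a * ?V * delta_m CARD('m))"
    using g unfolding G_class_def
    by (intro nn_integral_has_integral_lebesgue has_integral_mult_right)
      (auto simp: unit_ellipsoid_volume_def)
  finally show ?thesis
    by (simp only: ennreal_mult'[symmetric] powr_nonneg_iff order_refl powr_ge_zero)
qed

lemma finite_measure_RES:
  fixes \<mu> :: "real^'m"
  assumes "quadratic_posdef S" "G_class CARD('m) g"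
  shows "finite_measure (RES \<mu> S g)"
  by (rule finite_measureI) (simp add: emeasure_RES_space[OF assms])

section \<open>Square-integrable functions and orthogonal projections\<close>

lemma integrable_mult_square_integrable:
  fixes f g :: "'a \<Rightarrow> real"
  assumes [measurable]: "f \<in> borel_measurable M" "g \<in> borel_measurable M"
    and "integrable M (\<lambda>x. (f x)\<^sup>2)" "integrable M (\<lambda>x. (g x)\<^sup>2)"
  shows "integrable M (\<lambda>x. f x * g x)"
proof (rule Bochner_Integration.integrable_bound[OF Bochner_Integration.integrable_add[OF assms(3,4)]])
  show "(\<lambda>x. f x * g x) \<in> borel_measurable M" by measurable
  have "\<bar>f x * g x\<bar> \<le> (f x)\<^sup>2 + (g x)\<^sup>2" for x
    using sum_squares_bound[of "\<bar>f x\<bar>" "\<bar>g x\<bar>"] abs_ge_zero[of "f x * g x"]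
    unfolding abs_mult power2_abs by linarith
  then show "AE x in M. norm (f x * g x) \<le> norm ((f x)\<^sup>2 + (g x)\<^sup>2)" by simp
qed

lemma square_integrable_add:
  fixes f g :: "'a \<Rightarrow> real"
  assumes [measurable]: "f \<in> borel_measurable M" "g \<in> borel_measurable M"
    and "integrable M (\<lambda>x. (f x)\<^sup>2)" "integrable M (\<lambda>x. (g x)\<^sup>2)"
  shows "integrable M (\<lambda>x. (f x + g x)\<^sup>2)"
proof -
  have "integrable M (\<lambda>x. (f x)\<^sup>2 + 2 * (f x * g x) + (g x)\<^sup>2)"
    by (intro Bochner_Integration.integrable_add integrable_mult_right
        integrable_mult_square_integrable[OF assms] assms(3,4))
  then show ?thesis by (simp add: power2_sum ac_simps)
qed

lemma integrable_square_AE_bound: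
  fixes f :: "'a \<Rightarrow> real"
  assumes "integrable M g" "f \<in> borel_measurable M" "AE x in M. (f x)\<^sup>2 \<le> g x"
  shows "integrable M (\<lambda>x. (f x)\<^sup>2)"
  by (rule Bochner_Integration.integrable_bound[OF assms(1)]) (use assms(2,3) in \<open>auto elim!: AE_mp\<close>)

lemma orth_proj_AE_eq_0:
  fixes f :: "'a \<Rightarrow> real"
  assumes [measurable]: "f \<in> borel_measurable M" and f_L2: "integrable M (\<lambda>x. (f x)\<^sup>2)"
    and S_L2: "\<And>p. p \<in> S \<Longrightarrow> p \<in> borel_measurable M \<and> integrable M (\<lambda>x. (p x)\<^sup>2)"
    and zero: "(\<lambda>x. 0) \<in> S"
    and orth: "\<And>p. p \<in> S \<Longrightarrow> (\<integral>x. f x * p x \<partial>M) = 0"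
  shows "orth_proj M S f \<in> S" "AE x in M. orth_proj M S f x = 0"
proof -
  let ?p = "orth_proj M S f"
  have "is_orth_proj M S f (\<lambda>x. 0)"
    unfolding is_orth_proj_def using zero orth by simp
  then have p: "is_orth_proj M S f ?p"
    unfolding orth_proj_def by (rule someI[where P = "is_orth_proj M S f"])
  then show "?p \<in> S" unfolding is_orth_proj_def by blast
  then have [measurable]: "?p \<in> borel_measurable M" and p_L2: "integrable M (\<lambda>x. (?p x)\<^sup>2)"
    using S_L2 by auto
  have fp: "integrable M (\<lambda>x. f x * ?p x)"
    by (rule integrable_mult_square_integrable[OF _ _ f_L2 p_L2]) measurable
  \<comment> \<open>the residual f - p is orthogonal to p, and so is f itself\<close>
  have "0 = (\<integral>x. (f x - ?p x) * ?p x \<partial>M)"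
    using p \<open>?p \<in> S\<close> unfolding is_orth_proj_def by simp
  also have "\<dots> = (\<integral>x. f x * ?p x \<partial>M) - (\<integral>x. (?p x)\<^sup>2 \<partial>M)"
    by (subst Bochner_Integration.integral_diff[OF fp p_L2, symmetric])
      (simp add: algebra_simps power2_eq_square)
  finally have "(\<integral>x. (?p x)\<^sup>2 \<partial>M) = 0" using orth[OF \<open>?p \<in> S\<close>] by simp
  then have "AE x in M. (?p x)\<^sup>2 = 0" using integral_nonneg_eq_0_iff_AE[OF p_L2] by simp
  then show "AE x in M. ?p x = 0" by eventually_elim simp
qed

lemma Emat_cong_AE:
  fixes u v :: "'a \<Rightarrow> real^'n"
  assumes "\<And>i. (\<lambda>x. u x $ i) \<in> borel_measurable M" "\<And>i. (\<lambda>x. v x $ i) \<in> borel_measurable M"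
    and "\<And>i. AE x in M. u x $ i = v x $ i"
  shows "Emat M u u = Emat M v v"
proof -
  note [measurable] = assms(1,2)
  have "integral\<^sup>L M (\<lambda>x. u x $ i * u x $ j) = integral\<^sup>L M (\<lambda>x. v x $ i * v x $ j)" for i j
    using assms(3)[of i] assms(3)[of j]
    by (intro integral_cong_AE) (measurable, auto elim: AE_mp)
  then show ?thesis unfolding Emat_def by (simp add: vec_eq_iff)
qed

section \<open>Scores of the location-scatter model\<close>

locale RES_location_scatter =
  fixes mu :: "real^'q \<Rightarrow> real^'m" and Sig :: "real^'r \<Rightarrow> real^'m^'m" and g0 :: "real \<Rightarrow> real"
    and \<gamma>0 :: "real^'q" and \<xi>0 :: "real^'r"
    and Dmu :: "real^'q \<Rightarrow> real^'m" and DN :: "real^'r \<Rightarrow> real^'m^'m" and DP :: "real^'r \<Rightarrow> real"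
  assumes mu_deriv: "(mu has_derivative Dmu) (at \<gamma>0)"
    and inv_Sig_deriv: "((\<lambda>\<xi>. matrix_inv (Sig \<xi>)) has_derivative DN) (at \<xi>0)"
    and det_Sig_deriv: "((\<lambda>\<xi>. det (Sig \<xi>) powr (-1/2)) has_derivative DP) (at \<xi>0)"
    and Sig_posdef: "quadratic_posdef (Sig \<xi>0)"
    and g0_class: "G_class CARD('m) g0"
    and g0_pos: "\<forall>t>0. 0 < g0 t"
    and g0_C1: "g0 C1_differentiable_on {0<..}"
    and Q2_phi2_integrable: "integrable (RES (mu \<gamma>0) (Sig \<xi>0) g0) (\<lambda>x. (mahal (mu \<gamma>0) (Sig \<xi>0) x)\<^sup>2 *
          (- 2 * deriv g0 (mahal (mu \<gamma>0) (Sig \<xi>0) x) / g0 (mahal (mu \<gamma>0) (Sig \<xi>0) x))\<^sup>2)"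
    and Q_phi2_integrable: "integrable (RES (mu \<gamma>0) (Sig \<xi>0) g0) (\<lambda>x. mahal (mu \<gamma>0) (Sig \<xi>0) x *
          (- 2 * deriv g0 (mahal (mu \<gamma>0) (Sig \<xi>0) x) / g0 (mahal (mu \<gamma>0) (Sig \<xi>0) x))\<^sup>2)"
begin

abbreviation "\<mu>0 \<equiv> mu \<gamma>0"
abbreviation "N0 \<equiv> matrix_inv (Sig \<xi>0)"
abbreviation "c0 \<equiv> det (Sig \<xi>0) powr (-1/2)"
abbreviation "P0 \<equiv> RES \<mu>0 (Sig \<xi>0) g0"
abbreviation "Q \<equiv> mahal \<mu>0 (Sig \<xi>0)"
abbreviation \<phi>0 :: "real \<Rightarrow> real" where "\<phi>0 q \<equiv> - 2 * deriv g0 q / g0 q"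
abbreviation "s\<gamma> \<equiv> \<lambda>x. fst (score mu Sig g0 (\<gamma>0, \<xi>0) x)"
abbreviation "s\<xi> \<equiv> \<lambda>x. snd (score mu Sig g0 (\<gamma>0, \<xi>0) x)"

\<comment> \<open>The symmetrised form, since the inverse scatter matrix is not assumed symmetric here.\<close>
definition location_form :: "'q \<Rightarrow> real^'m \<Rightarrow> real" where
  "location_form i d = (Dmu (axis i 1) \<bullet> (N0 *v d) + d \<bullet> (N0 *v Dmu (axis i 1))) / 2"

definition scatter_form :: "'r \<Rightarrow> real^'m \<Rightarrow> real" where
  "scatter_form j d = d \<bullet> (DN (axis j 1) *v d) / 2"

lemma has_derivative_mahal_param:
  "((\<lambda>\<theta>. mahal (mu (fst \<theta>)) (Sig (snd \<theta>)) x) has_derivative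
     (\<lambda>h. (x - \<mu>0) \<bullet> (DN (snd h) *v (x - \<mu>0))
        - (Dmu (fst h) \<bullet> (N0 *v (x - \<mu>0)) + (x - \<mu>0) \<bullet> (N0 *v Dmu (fst h)))))
   (at (\<gamma>0, \<xi>0))"
proof -
  have "((\<lambda>\<theta>. mu (fst \<theta>)) has_derivative (\<lambda>h. Dmu (fst h))) (at (\<gamma>0, \<xi>0))"
    by (rule has_derivative_compose[OF has_derivative_fst[OF has_derivative_ident]]) (simp add: mu_deriv)
  then have u: "((\<lambda>\<theta>. x - mu (fst \<theta>)) has_derivative (\<lambda>h. - Dmu (fst h))) (at (\<gamma>0, \<xi>0))"
    using has_derivative_diff[OF has_derivative_const] by fastforce
  have N: "((\<lambda>\<theta>. matrix_inv (Sig (snd \<theta>))) has_derivative (\<lambda>h. DN (snd h))) (at (\<gamma>0, \<xi>0))"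
    by (rule has_derivative_compose[OF has_derivative_snd[OF has_derivative_ident]]) (simp add: inv_Sig_deriv)
  show ?thesis
    unfolding mahal_def
    by (rule has_derivative_eq_rhs[OF has_derivative_inner[OF u
          bounded_bilinear.FDERIV[OF bounded_bilinear_matrix_vector_mult N u]]])
      (simp add: fun_eq_iff vec.neg inner_add_right algebra_simps)
qed

lemma c0_pos: "0 < c0"
  using quadratic_posdef_det_pos[OF Sig_posdef] by simp

lemma Q_pos: "x \<noteq> \<mu>0 \<Longrightarrow> 0 < Q x"
  by (rule mahal_pos[OF Sig_posdef])

lemma g0_Q_pos: "x \<noteq> \<mu>0 \<Longrightarrow> 0 < g0 (Q x)"
  using g0_pos Q_pos by blast

lemma has_derivative_log_lik:
  assumes x: "x \<noteq> \<mu>0"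
  shows "(log_lik mu Sig g0 x has_derivative
     (\<lambda>h. DP (snd h) / c0 - \<phi>0 (Q x) / 2 * ((x - \<mu>0) \<bullet> (DN (snd h) *v (x - \<mu>0))
        - (Dmu (fst h) \<bullet> (N0 *v (x - \<mu>0)) + (x - \<mu>0) \<bullet> (N0 *v Dmu (fst h)))))) (at (\<gamma>0, \<xi>0))"
proof -
  let ?\<theta>0 = "(\<gamma>0, \<xi>0)"
  have g: "(g0 has_derivative (*) (deriv g0 (Q x))) (at (mahal (mu (fst ?\<theta>0)) (Sig (snd ?\<theta>0)) x))"
    using C1_differentiable_on_open_DERIV[OF g0_C1] Q_pos[OF x] by (simp add: has_field_derivative_def)
  have P: "((\<lambda>\<theta>. det (Sig (snd \<theta>)) powr (-1/2)) has_derivative (\<lambda>h. DP (snd h))) (at ?\<theta>0)"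
    by (rule has_derivative_compose[OF has_derivative_snd[OF has_derivative_ident]]) (use det_Sig_deriv in simp)
  have gq: "0 < g0 (Q x)" by (rule g0_Q_pos[OF x])
  then have pos: "0 < c0 * g0 (Q x)" using c0_pos by simp
  then have ln: "(ln has_derivative (*) (inverse (c0 * g0 (Q x))))
      (at (det (Sig (snd ?\<theta>0)) powr (-1/2) * g0 (mahal (mu (fst ?\<theta>0)) (Sig (snd ?\<theta>0)) x)))"
    using DERIV_ln[OF pos] by (simp add: has_field_derivative_def)
  have eq: "log_lik mu Sig g0 x =
      (\<lambda>\<theta>. ln (det (Sig (snd \<theta>)) powr (-1/2) * g0 (mahal (mu (fst \<theta>)) (Sig (snd \<theta>)) x)))"
    by (simp add: fun_eq_iff log_lik_def RES_density_def)
  show ?thesis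
    unfolding eq
    by (rule has_derivative_eq_rhs[OF has_derivative_compose[OF has_derivative_mult[OF P
          has_derivative_compose[OF has_derivative_mahal_param g]] ln]])
      (use c0_pos gq in \<open>simp add: fun_eq_iff field_simps\<close>)
qed

lemma derivatives_zero: "Dmu 0 = 0" "DN 0 = 0" "DP 0 = 0"
  using mu_deriv inv_Sig_deriv det_Sig_deriv by (auto dest!: has_derivative_linear intro: linear_0)

lemma score_location:
  assumes "x \<noteq> \<mu>0"
  shows "s\<gamma> x $ i = \<phi>0 (Q x) * location_form i (x - \<mu>0)"
proof -
  have "s\<gamma> x $ i = score mu Sig g0 (\<gamma>0, \<xi>0) x \<bullet> (axis i 1, 0)"
    by (cases "score mu Sig g0 (\<gamma>0, \<xi>0) x") (simp add: inner_axis)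
  then show ?thesis
    unfolding score_def inner_gradient[OF has_derivative_log_lik[OF assms]]
    using g0_Q_pos[OF assms] by (simp add: derivatives_zero location_form_def) (simp add: field_simps)
qed

lemma score_scatter:
  assumes "x \<noteq> \<mu>0"
  shows "s\<xi> x $ j = DP (axis j 1) / c0 - \<phi>0 (Q x) * scatter_form j (x - \<mu>0)"
proof -
  have "s\<xi> x $ j = score mu Sig g0 (\<gamma>0, \<xi>0) x \<bullet> (0, axis j 1)"
    by (cases "score mu Sig g0 (\<gamma>0, \<xi>0) x") (simp add: inner_axis)
  then show ?thesis
    unfolding score_def inner_gradient[OF has_derivative_log_lik[OF assms]]
    using g0_Q_pos[OF assms] by (simp add: derivatives_zero scatter_form_def field_simps)
qed

lemma location_form_uminus: "location_form i (- d) = - location_form i d"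
  unfolding location_form_def by (simp add: vec.neg) argo

lemma scatter_form_uminus: "scatter_form j (- d) = scatter_form j d"
  unfolding scatter_form_def by (simp add: vec.neg)

lemma reflect_about_center:
  "x \<noteq> \<mu>0 \<Longrightarrow> 2 *\<^sub>R \<mu>0 - x \<noteq> \<mu>0 \<and> 2 *\<^sub>R \<mu>0 - x - \<mu>0 = - (x - \<mu>0)"
  by (auto simp: algebra_simps scaleR_2)

lemma score_location_reflect:
  assumes "x \<noteq> \<mu>0"
  shows "s\<gamma> (2 *\<^sub>R \<mu>0 - x) $ i = - s\<gamma> x $ i"
  using score_location[OF assms] score_location[of "2 *\<^sub>R \<mu>0 - x"] reflect_about_center[OF assms]
    location_form_uminus[of i "x - \<mu>0"]
  by (simp add: mahal_point_reflection)

lemma score_scatter_reflect: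
  assumes "x \<noteq> \<mu>0"
  shows "s\<xi> (2 *\<^sub>R \<mu>0 - x) = s\<xi> x"
  using score_scatter[OF assms] score_scatter[of "2 *\<^sub>R \<mu>0 - x"] reflect_about_center[OF assms]
    scatter_form_uminus[of _ "x - \<mu>0"]
  by (simp add: vec_eq_iff mahal_point_reflection)

lemma Q_coercive:
  obtains c where "0 < c" "\<And>x. c * (norm (x - \<mu>0))\<^sup>2 \<le> Q x"
  using quadratic_posdef_coercive[OF quadratic_posdef_matrix_inv[OF Sig_posdef]]
  unfolding mahal_def by metis

lemma location_form_bound:
  obtains K where "0 \<le> K" "\<And>d. \<bar>location_form i d\<bar> \<le> K * norm d"
proof -
  obtain K where K: "0 \<le> K" "\<And>a d. \<bar>a \<bullet> (N0 *v d)\<bar> \<le> K * norm a * norm d"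
    using abs_inner_matrix_vector_le[of N0] by blast
  let ?a = "Dmu (axis i 1)"
  have "\<bar>location_form i d\<bar> \<le> (K * norm ?a) * norm d" for d
    using K(2)[of ?a d] K(2)[of d ?a] unfolding location_form_def by (simp add: mult_ac)
  then show ?thesis using K(1) by (intro that[of "K * norm ?a"]) auto
qed

lemma scatter_form_bound:
  obtains K where "0 \<le> K" "\<And>d. \<bar>scatter_form j d\<bar> \<le> K * (norm d)\<^sup>2"
proof -
  obtain K where K: "0 \<le> K" "\<And>a d. \<bar>a \<bullet> (DN (axis j 1) *v d)\<bar> \<le> K * norm a * norm d"
    using abs_inner_matrix_vector_le[of "DN (axis j 1)"] by blast
  have "\<bar>scatter_form j d\<bar> \<le> K * (norm d)\<^sup>2" for d
    using K(1) K(2)[of d d] unfolding scatter_form_def by (simp add: power2_eq_square mult_ac)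
  then show ?thesis using K(1) by (intro that[of K]) auto
qed

lemma phi0_measurable [measurable]: "(\<lambda>q. if q \<in> {0<..} then \<phi>0 q else 0) \<in> borel_measurable borel"
proof (rule borel_measurable_continuous_on_if[OF _ _ continuous_on_const])
  show "continuous_on {0<..} \<phi>0"
    using C1_differentiable_on_open_continuous_deriv[OF g0_C1]
      C1_differentiable_imp_continuous_on[OF g0_C1] g0_pos
    by (intro continuous_intros) auto
qed simp

lemma location_form_measurable [measurable]: "location_form i \<in> borel_measurable borel"
  unfolding location_form_def
  by (intro borel_measurable_continuous_onI continuous_intros linear_continuous_on
      matrix_vector_mul_bounded_linear) simp

lemma scatter_form_measurable [measurable]: "scatter_form j \<in> borel_measurable borel"
  unfolding scatter_form_def
  by (intro borel_measurable_continuous_onI continuous_intros linear_continuous_on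
      matrix_vector_mul_bounded_linear) simp

lemma score_location_measurable [measurable]: "(\<lambda>x. s\<gamma> x $ i) \<in> borel_measurable borel"
proof -
  have "(\<lambda>x. s\<gamma> x $ i) = (\<lambda>x. if x \<in> {\<mu>0} then s\<gamma> \<mu>0 $ i
      else (if Q x \<in> {0<..} then \<phi>0 (Q x) else 0) * location_form i (x - \<mu>0))"
    using score_location Q_pos by (auto simp: fun_eq_iff)
  also have "\<dots> \<in> borel_measurable borel" by measurable
  finally show ?thesis .
qed

lemma score_scatter_measurable [measurable]: "(\<lambda>x. s\<xi> x $ j) \<in> borel_measurable borel"
proof -
  have "(\<lambda>x. s\<xi> x $ j) = (\<lambda>x. if x \<in> {\<mu>0} then s\<xi> \<mu>0 $ j
      else DP (axis j 1) / c0 - (if Q x \<in> {0<..} then \<phi>0 (Q x) else 0) * scatter_form j (x - \<mu>0))"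
    using score_scatter Q_pos by (auto simp: fun_eq_iff)
  also have "\<dots> \<in> borel_measurable borel" by measurable
  finally show ?thesis .
qed

lemma AE_P0_ne_center: "AE x in P0. x \<noteq> \<mu>0"
  by (rule AE_RES_ne_center[OF borel_measurable_RES_density[OF Sig_posdef g0_class]])

lemma integral_P0_odd:
  fixes f :: "real^'m \<Rightarrow> real"
  assumes "f \<in> borel_measurable borel" and "\<And>x. x \<noteq> \<mu>0 \<Longrightarrow> f (2 *\<^sub>R \<mu>0 - x) = - f x"
  shows "integral\<^sup>L P0 f = 0"
  using AE_P0_ne_center assms(2)
  by (intro integral_RES_odd[OF borel_measurable_RES_density[OF Sig_posdef g0_class] assms(1)])
    (auto elim: AE_mp)

lemma score_location_square_integrable: "integrable P0 (\<lambda>x. (s\<gamma> x $ i)\<^sup>2)"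
proof -
  obtain c where c: "0 < c" "\<And>x. c * (norm (x - \<mu>0))\<^sup>2 \<le> Q x" using Q_coercive by blast
  obtain K where K: "0 \<le> K" "\<And>d. \<bar>location_form i d\<bar> \<le> K * norm d" using location_form_bound by blast
  show ?thesis
  proof (rule integrable_square_AE_bound[OF integrable_mult_right[OF Q_phi2_integrable, of "K\<^sup>2 / c"]])
    show "(\<lambda>x. s\<gamma> x $ i) \<in> borel_measurable P0" by (simp add: borel_measurable_RES)
    show "AE x in P0. (s\<gamma> x $ i)\<^sup>2 \<le> K\<^sup>2 / c * (Q x * (\<phi>0 (Q x))\<^sup>2)"
      using AE_P0_ne_center
    proof eventually_elim
      case (elim x)
      have d2: "(norm (x - \<mu>0))\<^sup>2 \<le> Q x / c"
        using c(1) c(2)[of x] by (simp add: pos_le_divide_eq mult.commute)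
      have "(location_form i (x - \<mu>0))\<^sup>2 \<le> (K * norm (x - \<mu>0))\<^sup>2"
        using K by (simp add: abs_le_square_iff[symmetric])
      also have "\<dots> \<le> K\<^sup>2 * (Q x / c)"
        using mult_left_mono[OF d2, of "K\<^sup>2"] by (simp add: power_mult_distrib)
      finally have "(\<phi>0 (Q x))\<^sup>2 * (location_form i (x - \<mu>0))\<^sup>2 \<le> (\<phi>0 (Q x))\<^sup>2 * (K\<^sup>2 * (Q x / c))"
        by (rule mult_left_mono) simp
      then show ?case
        using score_location[OF elim] by (simp add: power_mult_distrib field_simps)
    qed
  qed
qed

lemma score_scatter_square_integrable: "integrable P0 (\<lambda>x. (s\<xi> x $ j)\<^sup>2)"
proof -
  interpret finite_measure P0 by (rule finite_measure_RES[OF Sig_posdef g0_class])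
  obtain c where c: "0 < c" "\<And>x. c * (norm (x - \<mu>0))\<^sup>2 \<le> Q x" using Q_coercive by blast
  obtain K where K: "0 \<le> K" "\<And>d. \<bar>scatter_form j d\<bar> \<le> K * (norm d)\<^sup>2" using scatter_form_bound by blast
  let ?\<beta> = "DP (axis j 1) / c0"
  show ?thesis
  proof (rule integrable_square_AE_bound[OF Bochner_Integration.integrable_add[OF
        integrable_const[of "2 * ?\<beta>\<^sup>2"] integrable_mult_right[OF Q2_phi2_integrable, of "2 * (K / c)\<^sup>2"]]])
    show "(\<lambda>x. s\<xi> x $ j) \<in> borel_measurable P0" by (simp add: borel_measurable_RES)
    show "AE x in P0. (s\<xi> x $ j)\<^sup>2 \<le> 2 * ?\<beta>\<^sup>2 + 2 * (K / c)\<^sup>2 * ((Q x)\<^sup>2 * (\<phi>0 (Q x))\<^sup>2)"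
      using AE_P0_ne_center
    proof eventually_elim
      case (elim x)
      have d2: "(norm (x - \<mu>0))\<^sup>2 \<le> Q x / c"
        using c(1) c(2)[of x] by (simp add: pos_le_divide_eq mult.commute)
      have sc: "\<bar>scatter_form j (x - \<mu>0)\<bar> \<le> K * (Q x / c)"
        using K(2)[of "x - \<mu>0"] mult_left_mono[OF d2 K(1)] by linarith
      have "(scatter_form j (x - \<mu>0))\<^sup>2 \<le> (K * (Q x / c))\<^sup>2"
        using power_mono[OF sc abs_ge_zero, of 2] by (simp only: power2_abs)
      then have "(scatter_form j (x - \<mu>0))\<^sup>2 \<le> (K / c)\<^sup>2 * (Q x)\<^sup>2"
        by (simp add: power_mult_distrib power_divide)
      then have "(\<phi>0 (Q x))\<^sup>2 * (scatter_form j (x - \<mu>0))\<^sup>2 \<le> (\<phi>0 (Q x))\<^sup>2 * ((K / c)\<^sup>2 * (Q x)\<^sup>2)"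
        by (rule mult_left_mono) simp
      then have "(\<phi>0 (Q x))\<^sup>2 * (scatter_form j (x - \<mu>0))\<^sup>2 \<le> (K / c)\<^sup>2 * ((Q x)\<^sup>2 * (\<phi>0 (Q x))\<^sup>2)"
        by (simp only: mult_ac)
      moreover have "(a - b)\<^sup>2 \<le> 2 * a\<^sup>2 + 2 * b\<^sup>2" for a b :: real
        using zero_le_power2[of "a + b"] unfolding power2_diff power2_sum by linarith
      then have "(s\<xi> x $ j)\<^sup>2 \<le> 2 * ?\<beta>\<^sup>2 + 2 * (\<phi>0 (Q x) * scatter_form j (x - \<mu>0))\<^sup>2"
        unfolding score_scatter[OF elim] .
      ultimately show ?case unfolding power_mult_distrib by linarith
    qed
  qed
qed

abbreviation "nuisance_tangent \<equiv> fun_set_plus (span_comp s\<xi>) (T_c P0 Q)"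

lemma nuisance_tangentE:
  assumes "p \<in> nuisance_tangent"
  obtains c h f where "p = (\<lambda>x. c \<bullet> s\<xi> x + h x)" "h \<in> borel_measurable P0"
    "integrable P0 (\<lambda>x. (h x)\<^sup>2)" "f \<in> borel_measurable borel" "AE x in P0. h x = f (Q x)"
  using assms unfolding fun_set_plus_def span_comp_def T_c_def T_u_def L2_0_def by blast

lemma zero_in_nuisance_tangent: "(\<lambda>x. 0) \<in> nuisance_tangent"
proof -
  have "(\<lambda>x. 0) \<in> T_c P0 Q"
    unfolding T_c_def T_u_def L2_0_def by (auto intro!: exI[of _ "\<lambda>_. 0"])
  moreover have "(\<lambda>x. 0 \<bullet> s\<xi> x) \<in> span_comp s\<xi>" unfolding span_comp_def by blast
  ultimately show ?thesis unfolding fun_set_plus_def by force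
qed

lemma score_scatter_inner_measurable [measurable]: "(\<lambda>x. c \<bullet> s\<xi> x) \<in> borel_measurable borel"
  unfolding inner_vec_def by measurable

lemma score_scatter_inner_square_integrable: "integrable P0 (\<lambda>x. (c \<bullet> s\<xi> x)\<^sup>2)"
proof (rule integrable_square_AE_bound)
  show "integrable P0 (\<lambda>x. (c \<bullet> c) * (\<Sum>j\<in>UNIV. (s\<xi> x $ j)\<^sup>2))"
    by (intro integrable_mult_right Bochner_Integration.integrable_sum score_scatter_square_integrable)
  show "(\<lambda>x. c \<bullet> s\<xi> x) \<in> borel_measurable P0" by (simp add: borel_measurable_RES)
  have "(c \<bullet> s\<xi> x)\<^sup>2 \<le> (c \<bullet> c) * (\<Sum>j\<in>UNIV. (s\<xi> x $ j)\<^sup>2)" for x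
    using Cauchy_Schwarz_ineq[of c "s\<xi> x"] by (simp add: inner_vec_def power2_eq_square)
  then show "AE x in P0. (c \<bullet> s\<xi> x)\<^sup>2 \<le> (c \<bullet> c) * (\<Sum>j\<in>UNIV. (s\<xi> x $ j)\<^sup>2)" by simp
qed

lemma nuisance_tangent_square_integrable:
  assumes "p \<in> nuisance_tangent"
  shows "p \<in> borel_measurable P0 \<and> integrable P0 (\<lambda>x. (p x)\<^sup>2)"
proof -
  obtain c h f where p: "p = (\<lambda>x. c \<bullet> s\<xi> x + h x)" and [measurable]: "h \<in> borel_measurable P0"
    and h_L2: "integrable P0 (\<lambda>x. (h x)\<^sup>2)" and "f \<in> borel_measurable borel" "AE x in P0. h x = f (Q x)"
    by (rule nuisance_tangentE[OF assms])
  have [measurable]: "(\<lambda>x. c \<bullet> s\<xi> x) \<in> borel_measurable P0"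
    by (simp add: borel_measurable_RES)
  have "integrable P0 (\<lambda>x. (p x)\<^sup>2)"
    unfolding p by (rule square_integrable_add[OF _ _ score_scatter_inner_square_integrable h_L2]) measurable
  moreover have "p \<in> borel_measurable P0" unfolding p by measurable
  ultimately show ?thesis by blast
qed

lemma score_location_orthogonal:
  assumes "p \<in> nuisance_tangent"
  shows "(\<integral>x. s\<gamma> x $ i * p x \<partial>P0) = 0"
proof -
  obtain c h f where p: "p = (\<lambda>x. c \<bullet> s\<xi> x + h x)" and [measurable]: "h \<in> borel_measurable P0"
    and "integrable P0 (\<lambda>x. (h x)\<^sup>2)" and [measurable]: "f \<in> borel_measurable borel"
    and hf: "AE x in P0. h x = f (Q x)"
    by (rule nuisance_tangentE[OF assms])
  have "(\<integral>x. s\<gamma> x $ i * p x \<partial>P0) = (\<integral>x. s\<gamma> x $ i * (c \<bullet> s\<xi> x + f (Q x)) \<partial>P0)"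
    using hf unfolding p by (intro integral_cong_AE) (auto simp: borel_measurable_RES elim: AE_mp)
  also have "\<dots> = 0"
    by (rule integral_P0_odd)
      (measurable, simp add: score_location_reflect score_scatter_reflect mahal_point_reflection)
  finally show ?thesis .
qed

lemma cross_information_zero: "Emat P0 s\<gamma> s\<xi> = 0"
proof -
  have "(\<integral>x. s\<gamma> x $ i * s\<xi> x $ j \<partial>P0) = 0" for i j
    by (rule integral_P0_odd) (measurable, simp add: score_location_reflect score_scatter_reflect)
  then show ?thesis unfolding Emat_def by (simp add: vec_eq_iff)
qed

lemma efficient_information_eq:
  "Emat P0 (\<lambda>x. \<chi> i. s\<gamma> x $ i - orth_proj P0 nuisance_tangent (\<lambda>y. s\<gamma> y $ i) x)
           (\<lambda>x. \<chi> i. s\<gamma> x $ i - orth_proj P0 nuisance_tangent (\<lambda>y. s\<gamma> y $ i) x) = Emat P0 s\<gamma> s\<gamma>"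
proof (rule Emat_cong_AE)
  fix i
  have "(\<lambda>x. s\<gamma> x $ i) \<in> borel_measurable P0" by (simp add: borel_measurable_RES)
  note proj = orth_proj_AE_eq_0[OF this score_location_square_integrable nuisance_tangent_square_integrable
      zero_in_nuisance_tangent score_location_orthogonal]
  then have zero: "AE x in P0. orth_proj P0 nuisance_tangent (\<lambda>y. s\<gamma> y $ i) x = 0" by blast
  have [measurable]: "orth_proj P0 nuisance_tangent (\<lambda>y. s\<gamma> y $ i) \<in> borel_measurable P0"
    using proj(1) nuisance_tangent_square_integrable by blast
  show "(\<lambda>x. (\<chi> i. s\<gamma> x $ i - orth_proj P0 nuisance_tangent (\<lambda>y. s\<gamma> y $ i) x) $ i) \<in> borel_measurable P0"
    by (simp add: borel_measurable_RES[symmetric])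
  show "(\<lambda>x. s\<gamma> x $ i) \<in> borel_measurable P0" by (simp add: borel_measurable_RES)
  show "AE x in P0. (\<chi> i. s\<gamma> x $ i - orth_proj P0 nuisance_tangent (\<lambda>y. s\<gamma> y $ i) x) $ i = s\<gamma> x $ i"
    using zero by eventually_elim simp
qed

end

theorem proposition5:
  fixes \<Gamma> :: "(real^'q) set" and \<Psi> :: "(real^'r) set"
    and mu :: "real^'q \<Rightarrow> real^'m" and Sig :: "real^'r \<Rightarrow> real^'m^'m"
    and g0 :: "real \<Rightarrow> real" and \<gamma>0 :: "real^'q" and \<xi>0 :: "real^'r"
  defines "P0 \<equiv> RES (mu \<gamma>0) (Sig \<xi>0) g0"
    and "Q \<equiv> mahal (mu \<gamma>0) (Sig \<xi>0)"
    and "\<phi>0 \<equiv> (\<lambda>q. - 2 * deriv g0 q / g0 q)"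
    and "s\<gamma> \<equiv> (\<lambda>x. fst (score mu Sig g0 (\<gamma>0, \<xi>0) x))"
    and "s\<xi> \<equiv> (\<lambda>x. snd (score mu Sig g0 (\<gamma>0, \<xi>0) x))"
  assumes open_params: "open \<Gamma>" "open \<Psi>"
    and diff: "mu differentiable_on \<Gamma>" "Sig differentiable_on \<Psi>"
    and P1: "continuous_on \<Gamma> mu" "continuous_on \<Psi> Sig"
    and P2: "\<forall>\<gamma>\<in>\<Gamma>. \<forall>\<xi>\<in>\<Psi>. \<forall>D.
               ((\<lambda>\<theta>. (mu (fst \<theta>), Sig (snd \<theta>))) has_derivative D) (at (\<gamma>, \<xi>)) \<longrightarrow> inj D"
    and P3: "\<forall>\<xi>\<in>\<Psi>. sym_posdef (Sig \<xi>)"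
    and truth: "\<gamma>0 \<in> \<Gamma>" "\<xi>0 \<in> \<Psi>"
    and g0_class: "Gbar_class CARD('m) g0"
    and g0_pos: "\<forall>t>0. 0 < g0 t"
    and g0_C1: "g0 C1_differentiable_on {0<..}"
    and g0_tail: "((\<lambda>q. q powr (real CARD('m) / 2 + 1) * g0 q) \<longlongrightarrow> 0) at_top"
    and P4: "integrable P0 (\<lambda>x. (Q x)\<^sup>2)"
            "integrable P0 (\<lambda>x. (Q x)\<^sup>2 * (\<phi>0 (Q x))\<^sup>2)"
            "integrable P0 (\<lambda>x. Q x * (\<phi>0 (Q x))\<^sup>2)"
  shows "let I\<gamma> = Emat P0 s\<gamma> s\<gamma>; I\<gamma>\<xi> = Emat P0 s\<gamma> s\<xi>; I\<xi> = Emat P0 s\<xi> s\<xi>;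
             Ibar_param = I\<gamma> - I\<gamma>\<xi> ** matrix_inv I\<xi> ** transpose I\<gamma>\<xi>;
             S = fun_set_plus (span_comp s\<xi>) (T_c P0 Q);
             sbar = (\<lambda>x. \<chi> i. s\<gamma> x $ i - orth_proj P0 S (\<lambda>y. s\<gamma> y $ i) x);
             Ibar_semi = Emat P0 sbar sbar
         in Ibar_semi = Ibar_param \<and> Ibar_param = I\<gamma>"
proof -
  have Sig_diff: "Sig differentiable (at \<xi>0)"
    using diff(2) open_params(2) truth(2) differentiable_on_eq_differentiable_at by blast
  have Sig_posdef: "quadratic_posdef (Sig \<xi>0)"
    using P3 truth(2) sym_posdef_imp_quadratic_posdef by blast
  obtain Dmu where "(mu has_derivative Dmu) (at \<gamma>0)"
    using diff(1) open_params(1) truth(1) differentiable_on_eq_differentiable_at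
    unfolding differentiable_def by blast
  moreover obtain DN where "((\<lambda>\<xi>. matrix_inv (Sig \<xi>)) has_derivative DN) (at \<xi>0)"
    using differentiable_matrix_inv[OF Sig_diff quadratic_posdef_invertible[OF Sig_posdef]]
    unfolding differentiable_def by blast
  moreover obtain DP where "((\<lambda>\<xi>. det (Sig \<xi>) powr (-1/2)) has_derivative DP) (at \<xi>0)"
    using differentiable_det_powr[OF Sig_diff quadratic_posdef_det_pos[OF Sig_posdef]]
    unfolding differentiable_def by blast
  ultimately interpret RES_location_scatter mu Sig g0 \<gamma>0 \<xi>0 Dmu DN DP
    using Sig_posdef g0_class g0_pos g0_C1 P4(2,3)
    by unfold_locales (simp_all add: Gbar_class_def P0_def Q_def \<phi>0_def)
  have "(0::real^'r^'q) ** M ** transpose 0 = 0" for M :: "real^'r^'r"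
    by (simp add: vec_eq_iff matrix_matrix_mult_def transpose_def)
  then show ?thesis
    unfolding P0_def Q_def s\<gamma>_def s\<xi>_def Let_def cross_information_zero efficient_information_eq
    by simp
qed

end
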